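(* Let $\mathbf P$ be the edge-probability matrix of a directed stochastic block model with $K_n$ communities, community-probability vector $\boldsymbol\rho$ with $\rho_{\min}=\min_k\rho_k>0$, block matrix $\mathbf B$ with pairwise distinct rows, and sparsity factor $\gamma_n$. Let $E_{\min}=n\rho_{\min}/2$ and $L_n=2\exp\big\{-\frac{\frac12(\frac{\rho_{\min}}2)^2n}{1+\frac13(\frac{\rho_{\min}}2)}\big\}$. Then $$\mathbb P\left(d_{\mathbf P}^*>\gamma_n\sqrt{E_{\min}}\,d_{\mathbf B}^*\right)\ge1-\binom{K_n}{2}K_nL_n.$$ Moreover, if $\frac{n\rho_{\min}^2}{8(1+\frac16\rho_{\min})}-\log\big(K_n^2(K_n-1)\big)\to\infty$ as $n\to\infty$, then this lower bound converges to $1$.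
   Context: Model: nodes $[n]$; labels $Z_1,\dots,Z_n$ i.i.d. Categorical$(\boldsymbol\rho)$ on $[K_n]$, $\pi(i)=Z_i$; $\mathbf B\in[0,1]^{K_n\times K_n}$; $\gamma_n\in(0,1]$; $P_{ij}=\gamma_nB_{\pi(i)\pi(j)}$ for all $i,j\in[n]$ (including $i=j$). $d_{\mathbf B}^*=\min_{a\ne b}\|\mathbf B_{a\cdot}-\mathbf B_{b\cdot}\|_2$ and $d_{\mathbf P}^*=\min\{\|\mathbf P_{i\cdot}-\mathbf P_{j\cdot}\|_2: i,j\in[n],\ \pi(i)\ne\pi(j)\}$. $\boldsymbol\rho$, $K_n$, $\mathbf B$, $\gamma_n$ may depend on $n$. *)

theory Defs
  imports "HOL-Probability.Probability"
begin

text \<open>Communities are indexed by {..<K} (0-based), nodes by {..<n}.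
  A block matrix B is a function nat => nat => real (only entries with indices < K matter).\<close>

definition rho_min :: "nat \<Rightarrow> nat pmf \<Rightarrow> real" where
  "rho_min K rho = Min ((\<lambda>k. pmf rho k) ` {..<K})"

definition B_rowdist :: "nat \<Rightarrow> (nat \<Rightarrow> nat \<Rightarrow> real) \<Rightarrow> nat \<Rightarrow> nat \<Rightarrow> real" where
  "B_rowdist K B a b = sqrt (\<Sum>c<K. (B a c - B b c)^2)"

definition dB_star :: "nat \<Rightarrow> (nat \<Rightarrow> nat \<Rightarrow> real) \<Rightarrow> real" where
  "dB_star K B = Min {B_rowdist K B a b | a b. a < K \<and> b < K \<and> a \<noteq> b}"

definition Pmat :: "real \<Rightarrow> (nat \<Rightarrow> nat \<Rightarrow> real) \<Rightarrow> (nat \<Rightarrow> nat) \<Rightarrow> nat \<Rightarrow> nat \<Rightarrow> real" where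
  "Pmat \<gamma> B \<pi> i j = \<gamma> * B (\<pi> i) (\<pi> j)"

definition P_rowdist :: "nat \<Rightarrow> real \<Rightarrow> (nat \<Rightarrow> nat \<Rightarrow> real) \<Rightarrow> (nat \<Rightarrow> nat) \<Rightarrow> nat \<Rightarrow> nat \<Rightarrow> real" where
  "P_rowdist n \<gamma> B \<pi> i j = sqrt (\<Sum>l<n. (Pmat \<gamma> B \<pi> i l - Pmat \<gamma> B \<pi> j l)^2)"

text \<open>d_P^*: minimum over pairs of nodes in different communities; as an infimum in
  the extended reals, so it is +infinity if all nodes lie in the same community.\<close>
definition dP_star :: "nat \<Rightarrow> real \<Rightarrow> (nat \<Rightarrow> nat \<Rightarrow> real) \<Rightarrow> (nat \<Rightarrow> nat) \<Rightarrow> ereal" where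
  "dP_star n \<gamma> B \<pi> = Inf {ereal (P_rowdist n \<gamma> B \<pi> i j) | i j. i < n \<and> j < n \<and> \<pi> i \<noteq> \<pi> j}"

definition E_min :: "nat \<Rightarrow> real \<Rightarrow> real" where
  "E_min n rmin = real n * rmin / 2"

definition L_n :: "nat \<Rightarrow> real \<Rightarrow> real" where
  "L_n n rmin = 2 * exp (- ((1/2) * (rmin/2)^2 * real n / (1 + (1/3) * (rmin/2))))"

text \<open>Labels Z_1..Z_n i.i.d. Categorical(rho): product pmf on label vectors (default 0 outside [n]).\<close>
definition label_dist :: "nat \<Rightarrow> nat pmf \<Rightarrow> (nat \<Rightarrow> nat) pmf" where
  "label_dist n rho = Pi_pmf {..<n} 0 (\<lambda>_. rho)"

end

theory Submission
  imports Defs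
begin

text \<open>The size \<open>n\<^sub>c\<close> of community \<open>c\<close> is binomial with success probability
  \<open>\<rho>\<^sub>c \<ge> \<rho>\<^sub>m\<^sub>i\<^sub>n\<close>, so by Hoeffding's inequality \<open>n\<^sub>c \<le> n \<rho>\<^sub>m\<^sub>i\<^sub>n / 2 = E\<^sub>m\<^sub>i\<^sub>n\<close> with
  probability at most \<open>exp (-n \<rho>\<^sub>m\<^sub>i\<^sub>n\<^sup>2 / 2)\<close>. By a union bound, every community has
  more than \<open>E\<^sub>m\<^sub>i\<^sub>n\<close> nodes except with probability \<open>K exp (-n \<rho>\<^sub>m\<^sub>i\<^sub>n\<^sup>2 / 2)\<close>,
  which is below the (much cruder) bound of the theorem. On that event, grouping the
  columns of \<open>P\<close> by community gives, for nodes \<open>i, j\<close> in communities \<open>a \<noteq> b\<close>,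
  \<open>\<parallel>P\<^sub>i - P\<^sub>j\<parallel>\<^sup>2 = \<gamma>\<^sup>2 \<Sum>\<^sub>c n\<^sub>c (B\<^sub>a\<^sub>c - B\<^sub>b\<^sub>c)\<^sup>2 > \<gamma>\<^sup>2 E\<^sub>m\<^sub>i\<^sub>n \<parallel>B\<^sub>a - B\<^sub>b\<parallel>\<^sup>2\<close>, strictly because
  the rows \<open>B\<^sub>a\<close> and \<open>B\<^sub>b\<close> differ in some entry. The bound of the theorem is
  \<open>exp (-x\<^sub>n)\<close> for the quantity \<open>x\<^sub>n\<close> assumed to diverge.\<close>

lemma map_pmf_eq_bernoulli_pmf: "map_pmf (\<lambda>x. x = c) p = bernoulli_pmf (pmf p c)"
proof (rule pmf_eqI)
  fix b :: bool
  have "(\<lambda>x. x = c) -` {True} = {c}" "(\<lambda>x. x = c) -` {False} = - {c}" by auto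
  then show "pmf (map_pmf (\<lambda>x. x = c) p) b = pmf (bernoulli_pmf (pmf p c)) b"
    using measure_pmf.prob_compl[of "{c}" p]
    by (cases b) (simp_all add: pmf_map measure_pmf_single pmf_le_1 Compl_eq_Diff_UNIV)
qed

lemma card_fibre_Pi_pmf_binomial:
  assumes "finite A"
  shows "map_pmf (\<lambda>f. card {x\<in>A. f x = c}) (Pi_pmf A d (\<lambda>_. p)) = binomial_pmf (card A) (pmf p c)"
proof -
  have "binomial_pmf (card A) (pmf p c)
      = map_pmf (\<lambda>f. card {x\<in>A. f x}) (Pi_pmf A (d = c) (\<lambda>_. bernoulli_pmf (pmf p c)))"
    using assms by (intro binomial_pmf_altdef') (auto simp: pmf_le_1)
  also have "Pi_pmf A (d = c) (\<lambda>_. bernoulli_pmf (pmf p c))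
      = map_pmf (\<lambda>f. (\<lambda>x. x = c) \<circ> f) (Pi_pmf A d (\<lambda>_. p))"
    unfolding map_pmf_eq_bernoulli_pmf[symmetric] using assms by (intro Pi_pmf_map) auto
  finally show ?thesis by (simp add: pmf.map_comp o_def)
qed

lemma prob_card_fibre_le_half:
  fixes r :: real
  assumes "finite A" "0 \<le> r" "r \<le> pmf p c"
  shows "measure_pmf.prob (Pi_pmf A d (\<lambda>_. p)) {f. real (card {x\<in>A. f x = c}) \<le> card A * r / 2}
           \<le> exp (- (card A * r\<^sup>2 / 2))"
proof (cases "A = {}")
  case False
  define n q where "n = card A" and "q = pmf p c"
  have n: "n > 0" using False assms(1) by (simp add: n_def card_gt_0_iff)
  have "measure_pmf.prob (Pi_pmf A d (\<lambda>_. p)) {f. real (card {x\<in>A. f x = c}) \<le> n * r / 2}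
      = measure_pmf.prob (binomial_pmf n q) {k. real k \<le> n * r / 2}"
    unfolding n_def q_def card_fibre_Pi_pmf_binomial[OF assms(1), of c d p, symmetric]
    by (simp add: vimage_def)
  also have "\<dots> \<le> measure_pmf.prob (binomial_pmf n q) {k. real k \<le> n * q - n * q / 2}"
  proof (intro measure_pmf.finite_measure_mono subsetI)
    have "n * r \<le> n * q"
      using assms(3) by (intro mult_left_mono) (auto simp: q_def)
    then show "k \<in> {k. real k \<le> n * q - n * q / 2}" if "k \<in> {k. real k \<le> n * r / 2}" for k
      using that by (simp add: mult.commute)
  qed simp
  also have "\<dots> \<le> exp (- 2 * (n * q / 2)\<^sup>2 / n)"
    using n by (intro binomial_distribution.prob_le) (auto simp: binomial_distribution_def q_def pmf_le_1)
  also have "\<dots> = exp (- (n * q\<^sup>2 / 2))"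
    using n by (simp add: power2_eq_square field_simps)
  also have "\<dots> \<le> exp (- (n * r\<^sup>2 / 2))"
    using assms(2,3) by (auto simp: q_def intro!: mult_left_mono power_mono)
  finally show ?thesis by (simp add: n_def)
qed simp

lemma prob_some_card_fibre_le_half:
  fixes r :: real
  assumes "finite A" "finite C" "0 \<le> r" "\<And>c. c \<in> C \<Longrightarrow> r \<le> pmf p c"
  shows "measure_pmf.prob (Pi_pmf A d (\<lambda>_. p))
           {f. \<exists>c\<in>C. real (card {x\<in>A. f x = c}) \<le> card A * r / 2}
         \<le> card C * exp (- (card A * r\<^sup>2 / 2))"
proof -
  have "{f. \<exists>c\<in>C. real (card {x\<in>A. f x = c}) \<le> card A * r / 2}
      = (\<Union>c\<in>C. {f. real (card {x\<in>A. f x = c}) \<le> card A * r / 2})" by auto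
  also have "measure_pmf.prob (Pi_pmf A d (\<lambda>_. p)) \<dots>
      \<le> (\<Sum>c\<in>C. measure_pmf.prob (Pi_pmf A d (\<lambda>_. p)) {f. real (card {x\<in>A. f x = c}) \<le> card A * r / 2})"
    using assms(2) by (intro measure_pmf.finite_measure_subadditive_finite) auto
  also have "\<dots> \<le> (\<Sum>c\<in>C. exp (- (card A * r\<^sup>2 / 2)))"
    using assms by (intro sum_mono prob_card_fibre_le_half) auto
  finally show ?thesis by simp
qed

lemma rho_min_le_pmf: "c < K \<Longrightarrow> rho_min K p \<le> pmf p c"
  unfolding rho_min_def by (rule Min_le) auto

lemma dB_star_le_B_rowdist:
  assumes "a < K" "b < K" "a \<noteq> b"
  shows "dB_star K B \<le> B_rowdist K B a b"
proof -
  have "{B_rowdist K B a b | a b. a < K \<and> b < K \<and> a \<noteq> b}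
      \<subseteq> (\<lambda>(a, b). B_rowdist K B a b) ` ({..<K} \<times> {..<K})" by auto
  then have "finite {B_rowdist K B a b | a b. a < K \<and> b < K \<and> a \<noteq> b}"
    by (rule finite_subset) auto
  then show ?thesis
    unfolding dB_star_def using assms by (intro Min_le) auto
qed

lemma P_rowdist_eq_sum_community_sizes:
  assumes "\<pi> ` {..<n} \<subseteq> {..<K}"
  shows "P_rowdist n g B \<pi> i j
       = \<bar>g\<bar> * sqrt (\<Sum>c<K. real (card {l\<in>{..<n}. \<pi> l = c}) * (B (\<pi> i) c - B (\<pi> j) c)\<^sup>2)"
proof -
  have "(\<Sum>l<n. (Pmat g B \<pi> i l - Pmat g B \<pi> j l)\<^sup>2) = g\<^sup>2 * (\<Sum>l<n. (B (\<pi> i) (\<pi> l) - B (\<pi> j) (\<pi> l))\<^sup>2)"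
    by (simp add: Pmat_def sum_distrib_left power_mult_distrib[symmetric] right_diff_distrib)
  also have "(\<Sum>l<n. (B (\<pi> i) (\<pi> l) - B (\<pi> j) (\<pi> l))\<^sup>2)
      = (\<Sum>c<K. real (card {l\<in>{..<n}. \<pi> l = c}) * (B (\<pi> i) c - B (\<pi> j) c)\<^sup>2)"
    using sum.group[OF _ _ assms, of "\<lambda>l. (B (\<pi> i) (\<pi> l) - B (\<pi> j) (\<pi> l))\<^sup>2"] by simp
  finally show ?thesis by (simp add: P_rowdist_def real_sqrt_mult)
qed

lemma weighted_sum_gt_B_rowdist:
  assumes w: "\<And>c. c < K \<Longrightarrow> w c > E" and "E \<ge> 0" and c0: "c0 < K" "B a c0 \<noteq> B b c0"
  shows "sqrt E * B_rowdist K B a b < sqrt (\<Sum>c<K. w c * (B a c - B b c)\<^sup>2)"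
proof -
  have "(\<Sum>c<K. E * (B a c - B b c)\<^sup>2) < (\<Sum>c<K. w c * (B a c - B b c)\<^sup>2)"
  proof (rule sum_strict_mono_ex1)
    show "\<forall>c\<in>{..<K}. E * (B a c - B b c)\<^sup>2 \<le> w c * (B a c - B b c)\<^sup>2"
      by (auto intro!: mult_right_mono less_imp_le[OF w])
    have "E * (B a c0 - B b c0)\<^sup>2 < w c0 * (B a c0 - B b c0)\<^sup>2"
      using c0 w[OF c0(1)] by (intro mult_strict_right_mono) auto
    then show "\<exists>c\<in>{..<K}. E * (B a c - B b c)\<^sup>2 < w c * (B a c - B b c)\<^sup>2"
      using c0(1) by blast
  qed simp
  then show ?thesis
    using \<open>E \<ge> 0\<close> by (simp add: B_rowdist_def real_sqrt_mult[symmetric] sum_distrib_left)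
qed

lemma dP_star_gt_if_community_sizes_gt:
  assumes \<pi>: "\<pi> ` {..<n} \<subseteq> {..<K}"
    and sizes: "\<And>c. c < K \<Longrightarrow> real (card {l\<in>{..<n}. \<pi> l = c}) > E" and "E \<ge> 0" and "g > 0"
    and rows_distinct: "\<And>a b. a < K \<Longrightarrow> b < K \<Longrightarrow> a \<noteq> b \<Longrightarrow> \<exists>c<K. B a c \<noteq> B b c"
  shows "dP_star n g B \<pi> > ereal (g * sqrt E * dB_star K B)"
proof -
  define S where "S = {ereal (P_rowdist n g B \<pi> i j) | i j. i < n \<and> j < n \<and> \<pi> i \<noteq> \<pi> j}"
  have "ereal (g * sqrt E * dB_star K B) < s" if "s \<in> S" for s
  proof -
    obtain i j where ij: "i < n" "j < n" "\<pi> i \<noteq> \<pi> j" and s: "s = P_rowdist n g B \<pi> i j"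
      using \<open>s \<in> S\<close> by (auto simp: S_def)
    have K: "\<pi> i < K" "\<pi> j < K" using \<pi> ij by auto
    obtain c0 where "c0 < K" "B (\<pi> i) c0 \<noteq> B (\<pi> j) c0"
      using rows_distinct[OF K ij(3)] by blast
    then have "sqrt E * B_rowdist K B (\<pi> i) (\<pi> j)
        < sqrt (\<Sum>c<K. real (card {l\<in>{..<n}. \<pi> l = c}) * (B (\<pi> i) c - B (\<pi> j) c)\<^sup>2)"
      using sizes \<open>E \<ge> 0\<close> by (intro weighted_sum_gt_B_rowdist)
    moreover have "sqrt E * dB_star K B \<le> sqrt E * B_rowdist K B (\<pi> i) (\<pi> j)"
      using dB_star_le_B_rowdist[OF K ij(3)] \<open>E \<ge> 0\<close> by (intro mult_left_mono) auto
    ultimately show ?thesis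
      using \<open>g > 0\<close> by (simp add: s P_rowdist_eq_sum_community_sizes[OF \<pi>] mult.assoc)
  qed
  moreover have "finite S"
    unfolding S_def
    by (rule finite_subset[of _ "(\<lambda>(i, j). ereal (P_rowdist n g B \<pi> i j)) ` ({..<n} \<times> {..<n})"]) auto
  ultimately show ?thesis
    unfolding dP_star_def S_def[symmetric]
    by (cases "S = {}") (simp_all add: finite_less_Inf_iff top_ereal_def)
qed

lemma real_choose_two_times_two: "real (k choose 2) * 2 = real k * (real k - 1)"
  by (simp add: binomial_gbinomial gbinomial_pochhammer' pochhammer_Suc_prod numeral_2_eq_2)

lemma L_n_eq: "r \<ge> 0 \<Longrightarrow> L_n n r = 2 * exp (- (n * r\<^sup>2 / (8 * (1 + r / 6))))"
  unfolding L_n_def by (simp add: power2_eq_square field_simps)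

lemma exp_le_half_L_n:
  assumes "r \<ge> 0"
  shows "exp (- (n * r\<^sup>2 / 2)) \<le> L_n n r / 2"
proof -
  have "n * r\<^sup>2 / (8 * (1 + r / 6)) \<le> n * r\<^sup>2 / 2"
    using assms by (intro divide_left_mono) auto
  then show ?thesis
    using assms by (simp add: L_n_eq)
qed

lemma choose_two_times_L_n_eq_exp:
  assumes "k \<ge> 2" "r \<ge> 0"
  shows "real (k choose 2) * k * L_n n r
       = exp (- (n * r\<^sup>2 / (8 * (1 + r / 6)) - ln (real k ^ 2 * (real k - 1))))"
proof -
  have "real (k choose 2) * k * L_n n r = real k ^ 2 * (real k - 1) * exp (- (n * r\<^sup>2 / (8 * (1 + r / 6))))"
    using assms(2) by (simp add: L_n_eq real_choose_two_times_two[symmetric] power2_eq_square)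
  also have "\<dots> = exp (- (n * r\<^sup>2 / (8 * (1 + r / 6)) - ln (real k ^ 2 * (real k - 1))))"
    using assms(1) by (simp add: exp_diff exp_minus field_simps)
  finally show ?thesis .
qed

lemma prob_dP_star_gt:
  assumes "K \<ge> 2" "set_pmf p \<subseteq> {..<K}" "rho_min K p > 0" "g > 0"
    and rows_distinct: "\<And>a b. a < K \<Longrightarrow> b < K \<Longrightarrow> a \<noteq> b \<Longrightarrow> \<exists>c<K. B a c \<noteq> B b c"
  shows "measure_pmf.prob (label_dist n p)
           {\<pi>. dP_star n g B \<pi> > ereal (g * sqrt (E_min n (rho_min K p)) * dB_star K B)}
         \<ge> 1 - real (K choose 2) * K * L_n n (rho_min K p)"
proof -
  define r where "r = rho_min K p"
  define small where "small = {\<pi>. \<exists>c\<in>{..<K}. real (card {l\<in>{..<n}. \<pi> l = c}) \<le> n * r / 2}"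
  define good where "good = {\<pi>. dP_star n g B \<pi> > ereal (g * sqrt (E_min n r) * dB_star K B)}"
  have "r > 0" using assms(3) by (simp add: r_def)
  have "set_pmf (label_dist n p) \<inter> - good \<subseteq> small"
  proof
    fix \<pi> assume \<pi>: "\<pi> \<in> set_pmf (label_dist n p) \<inter> - good"
    then have labels: "\<pi> ` {..<n} \<subseteq> {..<K}"
      using assms(2) by (auto simp: label_dist_def set_Pi_pmf PiE_dflt_def)
    show "\<pi> \<in> small"
    proof (rule ccontr)
      assume "\<pi> \<notin> small"
      then have "\<pi> \<in> good"
        unfolding good_def using labels \<open>r > 0\<close> assms(4) rows_distinct
        by (intro CollectI dP_star_gt_if_community_sizes_gt) (auto simp: small_def E_min_def not_le)
      with \<pi> show False by simp
    qed
  qed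
  then have "measure_pmf.prob (label_dist n p) (- good) \<le> measure_pmf.prob (label_dist n p) small"
    by (subst measure_Int_set_pmf[symmetric]) (auto intro: measure_pmf.finite_measure_mono)
  also have "\<dots> \<le> K * exp (- (n * r\<^sup>2 / 2))"
    unfolding small_def label_dist_def using prob_some_card_fibre_le_half[of "{..<n}" "{..<K}" r p 0]
    using \<open>r > 0\<close> by (simp add: r_def rho_min_le_pmf)
  also have "\<dots> \<le> K * (real (K choose 2) * L_n n r)"
  proof -
    have "1 \<le> real (K choose 2)"
      using real_choose_two_times_two[of K] assms(1) mult_mono[of 2 "real K" 1 "real K - 1"] by simp
    moreover have "L_n n r \<ge> 0" by (simp add: L_n_def)
    ultimately have "L_n n r / 2 \<le> real (K choose 2) * L_n n r"
      using mult_right_mono[of 1 "real (K choose 2)" "L_n n r"] by simp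
    then show ?thesis
      using exp_le_half_L_n[of r n] \<open>r > 0\<close> by (intro mult_left_mono) auto
  qed
  finally show ?thesis
    using measure_pmf.prob_compl[of good "label_dist n p"]
    by (simp add: good_def r_def Compl_eq_Diff_UNIV mult_ac)
qed

theorem lemma8:
  fixes K :: "nat \<Rightarrow> nat"
    and rho :: "nat \<Rightarrow> nat pmf"
    and B :: "nat \<Rightarrow> nat \<Rightarrow> nat \<Rightarrow> real"
    and \<gamma> :: "nat \<Rightarrow> real"
  assumes K_ge2: "\<And>n. K n \<ge> 2"
    and rho_supp: "\<And>n. set_pmf (rho n) \<subseteq> {..<K n}"
    and rho_min_pos: "\<And>n. rho_min (K n) (rho n) > 0"
    and B_range: "\<And>n a b. a < K n \<Longrightarrow> b < K n \<Longrightarrow> 0 \<le> B n a b \<and> B n a b \<le> 1"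
    and B_rows_distinct: "\<And>n a b. a < K n \<Longrightarrow> b < K n \<Longrightarrow> a \<noteq> b \<Longrightarrow> (\<exists>c < K n. B n a c \<noteq> B n b c)"
    and \<gamma>_range: "\<And>n. 0 < \<gamma> n \<and> \<gamma> n \<le> 1"
  shows "(\<forall>n. measure_pmf.prob (label_dist n (rho n))
              {\<pi>. dP_star n (\<gamma> n) (B n) \<pi>
                   > ereal (\<gamma> n * sqrt (E_min n (rho_min (K n) (rho n))) * dB_star (K n) (B n))}
            \<ge> 1 - real (K n choose 2) * real (K n) * L_n n (rho_min (K n) (rho n)))
       \<and> (filterlim (\<lambda>n. real n * (rho_min (K n) (rho n))^2 / (8 * (1 + (1/6) * rho_min (K n) (rho n)))
                        - ln (real (K n)^2 * (real (K n) - 1))) at_top sequentially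
          \<longrightarrow> (\<lambda>n. 1 - real (K n choose 2) * real (K n) * L_n n (rho_min (K n) (rho n))) \<longlonglongrightarrow> 1)"
proof (intro conjI allI impI)
  fix n
  show "measure_pmf.prob (label_dist n (rho n))
          {\<pi>. dP_star n (\<gamma> n) (B n) \<pi>
               > ereal (\<gamma> n * sqrt (E_min n (rho_min (K n) (rho n))) * dB_star (K n) (B n))}
        \<ge> 1 - real (K n choose 2) * real (K n) * L_n n (rho_min (K n) (rho n))"
    using K_ge2 rho_supp rho_min_pos \<gamma>_range B_rows_distinct by (intro prob_dP_star_gt) auto
next
  define f where "f n = real n * (rho_min (K n) (rho n))^2 / (8 * (1 + (1/6) * rho_min (K n) (rho n)))
                        - ln (real (K n)^2 * (real (K n) - 1))" for n
  assume "filterlim f at_top sequentially"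
  then have "(\<lambda>n. exp (- f n)) \<longlonglongrightarrow> 0"
    by (intro filterlim_compose[OF exp_at_bot]) (simp add: filterlim_uminus_at_top)
  moreover have "real (K n choose 2) * real (K n) * L_n n (rho_min (K n) (rho n)) = exp (- f n)" for n
    using K_ge2 rho_min_pos by (simp add: f_def choose_two_times_L_n_eq_exp less_imp_le)
  ultimately show "(\<lambda>n. 1 - real (K n choose 2) * real (K n) * L_n n (rho_min (K n) (rho n))) \<longlonglongrightarrow> 1"
    using tendsto_diff[OF tendsto_const, of _ 0 sequentially 1] by simp
qed

end
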